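(* Let $G$ be a connected chain graph with minimum degree $\delta(G)\ge 3$. Then $px_3(G)\le 3$. Moreover, the bound is tight: let $s\ge 4$ and $t\ge 2\cdot 2^3+4=20$, and let $G$ be the bipartite graph with parts $U=\{u_1,\dots,u_s\}$, $V=\{v_1,\dots,v_t\}$ where $N(u_1)=\dots=N(u_{s-3})=\{v_1,v_2,v_3\}$ and $N(u_{s-2})=N(u_{s-1})=N(u_s)=V$; then $px_3(G)=3$.
   Context: All graphs are finite, simple and undirected; $N(v)$ is the neighborhood of $v$. A bipartite graph $G$ with parts $U,V$ is a chain graph if $U$ can be ordered $u_1,\dots,u_s$ with $N(u_1)\subseteq N(u_2)\subseteq\cdots\subseteq N(u_s)$. An edge-coloring assigns colors to edges, adjacent edges being allowed to share a color. A tree in an edge-colored graph is proper if no two adjacent edges of it receive the same color. An edge-coloring of $G$ is a $3$-proper coloring if for every $3$-element set $S\subseteq V(G)$ there is a proper tree in $G$ containing all vertices of $S$; $px_3(G)$ is the minimum number of colors in a $3$-proper coloring of $G$. *)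

theory Defs
  imports Main
begin

definition simple_graph :: "'a set \<Rightarrow> 'a set set \<Rightarrow> bool" where
  "simple_graph V E \<longleftrightarrow> finite V \<and>
     (\<forall>e\<in>E. \<exists>u v. u \<in> V \<and> v \<in> V \<and> u \<noteq> v \<and> e = {u, v})"

definition nbhd :: "'a set \<Rightarrow> 'a set set \<Rightarrow> 'a \<Rightarrow> 'a set" where
  "nbhd V E v = {u \<in> V. {u, v} \<in> E}"

definition min_degree :: "'a set \<Rightarrow> 'a set set \<Rightarrow> nat" where
  "min_degree V E = Min ((\<lambda>v. card (nbhd V E v)) ` V)"

definition connected_graph :: "'a set \<Rightarrow> 'a set set \<Rightarrow> bool" where
  "connected_graph V E \<longleftrightarrow> V \<noteq> {} \<and>
     (\<forall>x\<in>V. \<forall>y\<in>V. (x, y) \<in> {(a, b). {a, b} \<in> E}\<^sup>*)"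

definition bipartition :: "'a set \<Rightarrow> 'a set set \<Rightarrow> 'a set \<Rightarrow> 'a set \<Rightarrow> bool" where
  "bipartition V E U W \<longleftrightarrow> U \<inter> W = {} \<and> U \<union> W = V \<and>
     (\<forall>e\<in>E. \<exists>u\<in>U. \<exists>w\<in>W. e = {u, w})"

definition chain_graph :: "'a set \<Rightarrow> 'a set set \<Rightarrow> bool" where
  "chain_graph V E \<longleftrightarrow> simple_graph V E \<and>
     (\<exists>U W. bipartition V E U W \<and>
        (\<exists>us. distinct us \<and> set us = U \<and>
           (\<forall>i j. i \<le> j \<and> j < length us \<longrightarrow> nbhd V E (us ! i) \<subseteq> nbhd V E (us ! j))))"

definition is_tree_in :: "'a set \<Rightarrow> 'a set set \<Rightarrow> 'a set \<Rightarrow> 'a set set \<Rightarrow> bool" where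
  "is_tree_in V E VT ET \<longleftrightarrow> VT \<subseteq> V \<and> ET \<subseteq> E \<and> (\<forall>e\<in>ET. e \<subseteq> VT) \<and>
     connected_graph VT ET \<and> card ET + 1 = card VT"

definition proper_edges :: "('a set \<Rightarrow> nat) \<Rightarrow> 'a set set \<Rightarrow> bool" where
  "proper_edges c ET \<longleftrightarrow>
     (\<forall>e1\<in>ET. \<forall>e2\<in>ET. e1 \<noteq> e2 \<and> e1 \<inter> e2 \<noteq> {} \<longrightarrow> c e1 \<noteq> c e2)"

definition three_proper_coloring :: "'a set \<Rightarrow> 'a set set \<Rightarrow> ('a set \<Rightarrow> nat) \<Rightarrow> bool" where
  "three_proper_coloring V E c \<longleftrightarrow>
     (\<forall>S. S \<subseteq> V \<and> card S = 3 \<longrightarrow>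
        (\<exists>VT ET. is_tree_in V E VT ET \<and> S \<subseteq> VT \<and> proper_edges c ET))"

definition px3 :: "'a set \<Rightarrow> 'a set set \<Rightarrow> nat" where
  "px3 V E = (LEAST k. \<exists>c :: 'a set \<Rightarrow> nat. (\<forall>e\<in>E. c e < k) \<and> three_proper_coloring V E c)"

text \<open>The extremal example: u_i = Inl i (1..s), v_j = Inr j (1..t).\<close>
definition ex_V :: "nat \<Rightarrow> nat \<Rightarrow> (nat + nat) set" where
  "ex_V s t = Inl ` {1..s} \<union> Inr ` {1..t}"

definition ex_E :: "nat \<Rightarrow> nat \<Rightarrow> (nat + nat) set set" where
  "ex_E s t = {{Inl i, Inr j} | i j. 1 \<le> i \<and> i \<le> s \<and> 1 \<le> j \<and> j \<le> t \<and>
                                   (s - 3 < i \<or> j \<le> 3)}"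

end

theory Submission
  imports Defs "HOL-Library.FuncSet"
begin

text \<open>
  In a chain graph \<open>U \<union> W\<close> with minimum degree at least 3, three neighbours
  \<open>b\<^sub>0, b\<^sub>1, b\<^sub>2\<close> of the vertex of \<open>U\<close> with the smallest neighbourhood are adjacent to
  all of \<open>U\<close>, and every vertex of \<open>W\<close>, having at least three neighbours, is adjacent to the
  three vertices \<open>a\<^sub>0, a\<^sub>1, a\<^sub>2\<close> of \<open>U\<close> with the largest neighbourhoods. Joining these six
  vertices by a suitably 3-coloured path and giving every other edge at \<open>a\<^sub>k\<close> or \<open>b\<^sub>k\<close>
  colour \<open>k\<close>, any three vertices are covered by a proper tree: the path plus at most three
  pendant edges, one of each colour.

  With two colours a proper tree has maximum degree 2, so any three of its vertices
  have degree sum at least 4. In the example the vertices \<open>v\<^sub>j\<close>, \<open>j \<ge> 4\<close>, are adjacent only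
  to \<open>u\<^sub>s\<^sub>-\<^sub>2, u\<^sub>s\<^sub>-\<^sub>1, u\<^sub>s\<close>; as \<open>t - 3 > 2 \<cdot> 2\<^sup>3\<close>, three of them see the same colours on these
  edges, and then a proper tree uses each \<open>u\<^sub>i\<close> for at most one edge to them, so their degrees
  sum to at most 3.
\<close>

lemma is_tree_in_singleton: "v \<in> V \<Longrightarrow> is_tree_in V E {v} {}"
  by (auto simp: is_tree_in_def connected_graph_def)

lemma is_tree_in_finite:
  assumes "is_tree_in V E VT ET"
  shows "finite VT" "finite ET"
proof -
  from assms have card: "card ET + 1 = card VT" and sub: "\<forall>e\<in>ET. e \<subseteq> VT"
    by (auto simp: is_tree_in_def)
  show "finite VT" using card card.infinite by fastforce
  moreover have "ET \<subseteq> Pow VT" using sub by auto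
  ultimately show "finite ET" by (simp add: finite_subset)
qed

lemma is_tree_in_insert_leaf:
  assumes T: "is_tree_in V E VT ET" and x: "x \<in> V" "x \<notin> VT" and y: "y \<in> VT" and xy: "{x, y} \<in> E"
  shows "is_tree_in V E (insert x VT) (insert {x, y} ET)"
proof -
  let ?R = "\<lambda>F. {(a, b). {a, b} \<in> F}"
  let ?ET' = "insert {x, y} ET"
  from T have sub: "VT \<subseteq> V" "ET \<subseteq> E" "\<forall>e\<in>ET. e \<subseteq> VT"
    and con: "\<forall>a\<in>VT. \<forall>b\<in>VT. (a, b) \<in> (?R ET)\<^sup>*" and card: "card ET + 1 = card VT"
    by (auto simp: is_tree_in_def connected_graph_def)
  have "{x, y} \<notin> ET" using sub(3) x(2) by auto
  then have card': "card ?ET' + 1 = card (insert x VT)"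
    using is_tree_in_finite[OF T] x(2) card by simp
  have mono: "(?R ET)\<^sup>* \<subseteq> (?R ?ET')\<^sup>*" by (rule rtrancl_mono) auto
  have to_y: "(a, y) \<in> (?R ?ET')\<^sup>* \<and> (y, a) \<in> (?R ?ET')\<^sup>*" if "a \<in> insert x VT" for a
  proof (cases "a = x")
    case True then show ?thesis by (auto simp: insert_commute)
  next
    case False then show ?thesis using that con y mono by blast
  qed
  have "connected_graph (insert x VT) ?ET'"
    unfolding connected_graph_def using to_y by (blast intro: rtrancl_trans)
  then show ?thesis unfolding is_tree_in_def using sub x y xy card' by auto
qed

lemma proper_edges_insert:
  assumes "proper_edges c ET" "\<forall>e\<in>ET. y \<in> e \<longrightarrow> c e \<noteq> c {x, y}" "\<forall>e\<in>ET. x \<notin> e"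
  shows "proper_edges c (insert {x, y} ET)"
  using assms unfolding proper_edges_def by (auto simp: insert_commute)

lemma card_incident_le_if_proper:
  assumes "proper_edges c ET" "\<forall>e\<in>ET. c e < k"
  shows "card {e\<in>ET. v \<in> e} \<le> k"
proof -
  have "inj_on c {e\<in>ET. v \<in> e}"
    using assms(1) unfolding inj_on_def proper_edges_def by blast
  moreover have "c ` {e\<in>ET. v \<in> e} \<subseteq> {..<k}" using assms(2) by auto
  ultimately have "card {e\<in>ET. v \<in> e} \<le> card {..<k}" by (intro card_inj_on_le) auto
  then show ?thesis by simp
qed

lemma sum_card_incident:
  assumes "finite VT" "finite ET" "\<forall>e\<in>ET. e \<subseteq> VT \<and> card e = 2"
  shows "(\<Sum>v\<in>VT. card {e\<in>ET. v \<in> e}) = 2 * card ET"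
proof -
  have "(\<Sum>v\<in>VT. card {e\<in>ET. v \<in> e}) = (\<Sum>v\<in>VT. \<Sum>e\<in>ET. of_bool (v \<in> e))"
    using assms(2) by (simp add: Int_def)
  also have "\<dots> = (\<Sum>e\<in>ET. \<Sum>v\<in>VT. of_bool (v \<in> e))" by (rule sum.swap)
  also have "\<dots> = (\<Sum>e\<in>ET. card e)"
    using assms(1,3) by (intro sum.cong) (auto simp: Int_absorb1)
  also have "\<dots> = (\<Sum>e\<in>ET. 2)" using assms(3) by simp
  finally show ?thesis by simp
qed

text \<open>A tree of maximum degree 2 is a path, so at most two of its vertices are leaves.\<close>
lemma tree_max_degree_2_sum_degree:
  assumes T: "is_tree_in V E VT ET" and two: "\<forall>e\<in>ET. card e = 2"
    and deg: "\<And>v. card {e\<in>ET. v \<in> e} \<le> 2" and S: "S \<subseteq> VT" "card S = 3"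
  shows "4 \<le> (\<Sum>v\<in>S. card {e\<in>ET. v \<in> e})"
proof -
  let ?d = "\<lambda>v. card {e\<in>ET. v \<in> e}"
  have fin: "finite VT" "finite ET" using is_tree_in_finite[OF T] by auto
  from T have card: "card ET + 1 = card VT" and sub: "\<forall>e\<in>ET. e \<subseteq> VT"
    by (auto simp: is_tree_in_def)
  have "(\<Sum>v\<in>VT. ?d v) = 2 * card ET"
    by (rule sum_card_incident) (use fin sub two in auto)
  moreover have "(\<Sum>v\<in>VT. ?d v) = (\<Sum>v\<in>VT - S. ?d v) + (\<Sum>v\<in>S. ?d v)"
    by (rule sum.subset_diff[OF S(1) fin(1)])
  moreover have "(\<Sum>v\<in>VT - S. ?d v) \<le> (\<Sum>v\<in>VT - S. 2)"
    by (rule sum_mono) (rule deg)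
  moreover have "card (VT - S) = card VT - 3"
    using S fin(1) by (simp add: card_Diff_subset finite_subset)
  moreover have "3 \<le> card VT" using card_mono[OF fin(1) S(1)] S(2) by simp
  ultimately show ?thesis using card by simp
qed

lemma px3_le:
  assumes "\<forall>e\<in>E. c e < k" "three_proper_coloring V E c"
  shows "px3 V E \<le> k"
  unfolding px3_def using assms by (blast intro: Least_le)

lemma less_px3:
  assumes "\<forall>e\<in>E. c e < m" "three_proper_coloring V E c"
    and "\<And>c. \<forall>e\<in>E. c e < k \<Longrightarrow> \<not> three_proper_coloring V E c"
  shows "k < px3 V E"
proof -
  obtain c' where "\<forall>e\<in>E. c' e < px3 V E" "three_proper_coloring V E c'"
    using LeastI_ex[of "\<lambda>k. \<exists>c. (\<forall>e\<in>E. c e < k) \<and> three_proper_coloring V E c"] assms(1,2)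
    unfolding px3_def by blast
  then show ?thesis using assms(3)[of c'] by (meson le_less_trans not_less)
qed

locale dominating_triples =
  fixes V :: "'a set" and E :: "'a set set" and U W :: "'a set" and a0 a1 a2 b0 b1 b2 :: 'a
  assumes parts: "U \<inter> W = {}" "V = U \<union> W"
    and a: "a0 \<in> U" "a1 \<in> U" "a2 \<in> U" "a0 \<noteq> a1" "a0 \<noteq> a2" "a1 \<noteq> a2"
    and b: "b0 \<in> W" "b1 \<in> W" "b2 \<in> W" "b0 \<noteq> b1" "b0 \<noteq> b2" "b1 \<noteq> b2"
    and a_adj: "\<And>w. w \<in> W \<Longrightarrow> {w, a0} \<in> E \<and> {w, a1} \<in> E \<and> {w, a2} \<in> E"
    and b_adj: "\<And>u. u \<in> U \<Longrightarrow> {u, b0} \<in> E \<and> {u, b1} \<in> E \<and> {u, b2} \<in> E"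
begin

lemma a_neq_b: "a0 \<noteq> b0" "a0 \<noteq> b1" "a0 \<noteq> b2" "a1 \<noteq> b0" "a1 \<noteq> b1" "a1 \<noteq> b2"
  "a2 \<noteq> b0" "a2 \<noteq> b1" "a2 \<noteq> b2"
  using a b parts by blast+

text \<open>Edges from \<open>a\<^sub>k\<close> or \<open>b\<^sub>k\<close> to the rest of the graph get colour \<open>k\<close>; the six special
  vertices are joined by the path \<open>b\<^sub>2 a\<^sub>1 b\<^sub>0 a\<^sub>2 b\<^sub>1 a\<^sub>0\<close>, coloured so that no edge
  of colour \<open>k\<close> on it touches \<open>a\<^sub>k\<close> or \<open>b\<^sub>k\<close>.\<close>
definition colouring :: "'a set \<Rightarrow> nat" where
  "colouring e =
    (if a0 \<in> e \<and> e \<inter> {b0, b1, b2} = {} then 0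
     else if a1 \<in> e \<and> e \<inter> {b0, b1, b2} = {} then 1
     else if a2 \<in> e \<and> e \<inter> {b0, b1, b2} = {} then 2
     else if b0 \<in> e \<and> e \<inter> {a0, a1, a2} = {} then 0
     else if b1 \<in> e \<and> e \<inter> {a0, a1, a2} = {} then 1
     else if b2 \<in> e \<and> e \<inter> {a0, a1, a2} = {} then 2
     else if e = {b2, a1} then 0
     else if e = {a1, b0} then 2
     else if e = {b0, a2} then 1
     else if e = {a2, b1} then 0
     else if e = {b1, a0} then 2
     else 0)"

lemma colouring_less_3: "colouring e < 3"
  unfolding colouring_def by auto

lemma colouring_a_edges:
  "w \<in> W \<Longrightarrow> w \<notin> {b0, b1, b2} \<Longrightarrow> colouring {w, a0} = 0 \<and> colouring {w, a1} = 1 \<and> colouring {w, a2} = 2"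
  using a b parts a_neq_b unfolding colouring_def by auto

lemma colouring_b_edges:
  "u \<in> U \<Longrightarrow> u \<notin> {a0, a1, a2} \<Longrightarrow> colouring {u, b0} = 0 \<and> colouring {u, b1} = 1 \<and> colouring {u, b2} = 2"
  using a b parts a_neq_b unfolding colouring_def by auto

lemma colouring_core_path:
  "colouring {b2, a1} = 0" "colouring {a1, b0} = 2" "colouring {b0, a2} = 1"
  "colouring {a2, b1} = 0" "colouring {b1, a0} = 2"
  using a b a_neq_b unfolding colouring_def by (simp_all add: doubleton_eq_iff)

abbreviation core_edges :: "'a set set" where
  "core_edges \<equiv> {{b2, a1}, {a1, b0}, {b0, a2}, {a2, b1}, {b1, a0}}"

lemma core_path_is_tree: "is_tree_in V E {b2, a1, b0, a2, b1, a0} core_edges"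
proof -
  have "a0 \<in> V" "a1 \<in> V" "a2 \<in> V" "b0 \<in> V" "b1 \<in> V" "b2 \<in> V" using a b parts by auto
  moreover have "{b1, a0} \<in> E" "{b0, a2} \<in> E" "{b2, a1} \<in> E" using a_adj b by auto
  moreover have "{a2, b1} \<in> E" "{a1, b0} \<in> E" using b_adj a by auto
  ultimately show ?thesis using a b a_neq_b
    by (intro is_tree_in_insert_leaf is_tree_in_singleton) auto
qed

lemma core_path_proper: "proper_edges colouring core_edges"
  unfolding proper_edges_def using colouring_core_path a b a_neq_b by auto

lemma extend_by_leaf:
  assumes T: "is_tree_in V E VT ET" "proper_edges colouring ET"
    and k: "(a, b, k) \<in> {(a0, b0, 0), (a1, b1, 1), (a2, b2, 2)}"
    and core: "{a0, a1, a2, b0, b1, b2} \<subseteq> VT"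
    and free: "\<forall>e\<in>ET. a \<in> e \<or> b \<in> e \<longrightarrow> colouring e \<noteq> k"
    and x: "x \<in> V"
  obtains VT' ET' where "is_tree_in V E VT' ET'" "proper_edges colouring ET'"
    "insert x VT \<subseteq> VT'" "ET \<subseteq> ET'" "\<forall>e\<in>ET' - ET. colouring e = k"
proof (cases "x \<in> VT")
  case True
  show ?thesis by (rule that[OF T]) (use True in auto)
next
  case False
  then have x_new: "x \<notin> {a0, a1, a2, b0, b1, b2}" using core by blast
  have "\<exists>y\<in>{a, b}. {x, y} \<in> E \<and> colouring {x, y} = k"
  proof (cases "x \<in> W")
    case True
    then have "{x, a0} \<in> E" "{x, a1} \<in> E" "{x, a2} \<in> E"
      and "colouring {x, a0} = 0" "colouring {x, a1} = 1" "colouring {x, a2} = 2"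
      using a_adj colouring_a_edges x_new by auto
    then show ?thesis using k by auto
  next
    case False
    then have "x \<in> U" using x parts by auto
    then have "{x, b0} \<in> E" "{x, b1} \<in> E" "{x, b2} \<in> E"
      and "colouring {x, b0} = 0" "colouring {x, b1} = 1" "colouring {x, b2} = 2"
      using b_adj colouring_b_edges x_new by auto
    then show ?thesis using k by auto
  qed
  then obtain y where y: "y \<in> {a, b}" "{x, y} \<in> E" "colouring {x, y} = k" by blast
  have "y \<in> VT" using y(1) k core by auto
  then have "is_tree_in V E (insert x VT) (insert {x, y} ET)"
    by (rule is_tree_in_insert_leaf[OF T(1) x False _ y(2)])
  moreover have "proper_edges colouring (insert {x, y} ET)"
  proof (rule proper_edges_insert[OF T(2)])
    show "\<forall>e\<in>ET. y \<in> e \<longrightarrow> colouring e \<noteq> colouring {x, y}" using free y(1,3) by auto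
    show "\<forall>e\<in>ET. x \<notin> e" using T(1) False by (auto simp: is_tree_in_def)
  qed
  ultimately show ?thesis by (rule that) (use y(3) in auto)
qed

lemma three_proper_colouring: "three_proper_coloring V E colouring"
  unfolding three_proper_coloring_def
proof (intro allI impI)
  fix S assume S: "S \<subseteq> V \<and> card S = 3"
  then obtain x y z where xyz: "S = {x, y, z}" "x \<in> V" "y \<in> V" "z \<in> V"
    by (auto simp: card_3_iff)
  have one_neq_2: "(1::nat) \<noteq> 2" by simp
  have core0: "{a0, a1, a2, b0, b1, b2} \<subseteq> {b2, a1, b0, a2, b1, a0}" by auto
  have free: "\<forall>e\<in>core_edges. a0 \<in> e \<or> b0 \<in> e \<longrightarrow> colouring e \<noteq> 0"
    "\<forall>e\<in>core_edges. a1 \<in> e \<or> b1 \<in> e \<longrightarrow> colouring e \<noteq> 1"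
    "\<forall>e\<in>core_edges. a2 \<in> e \<or> b2 \<in> e \<longrightarrow> colouring e \<noteq> 2"
    using colouring_core_path a b a_neq_b by auto
  have k: "(a0, b0, 0) \<in> {(a0, b0, 0), (a1, b1, 1), (a2, b2, 2)}"
    "(a1, b1, 1) \<in> {(a0, b0, 0), (a1, b1, 1), (a2, b2, 2)}"
    "(a2, b2, 2) \<in> {(a0, b0, 0), (a1, b1, 1), (a2, b2, 2)}" by simp_all
  obtain VT1 ET1 where T1: "is_tree_in V E VT1 ET1" "proper_edges colouring ET1"
    "insert x {b2, a1, b0, a2, b1, a0} \<subseteq> VT1" "core_edges \<subseteq> ET1"
    "\<forall>e\<in>ET1 - core_edges. colouring e = 0"
    by (rule extend_by_leaf[OF core_path_is_tree core_path_proper k(1) core0 free(1) xyz(2)])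
  have free1: "\<forall>e\<in>ET1. a1 \<in> e \<or> b1 \<in> e \<longrightarrow> colouring e \<noteq> 1"
    "\<forall>e\<in>ET1. a2 \<in> e \<or> b2 \<in> e \<longrightarrow> colouring e \<noteq> 2"
    using free(2,3) T1(5) by (metis DiffI zero_neq_one, metis DiffI zero_neq_numeral)
  have core1: "{a0, a1, a2, b0, b1, b2} \<subseteq> VT1" using T1(3) by auto
  obtain VT2 ET2 where T2: "is_tree_in V E VT2 ET2" "proper_edges colouring ET2"
    "insert y VT1 \<subseteq> VT2" "ET1 \<subseteq> ET2" "\<forall>e\<in>ET2 - ET1. colouring e = 1"
    by (rule extend_by_leaf[OF T1(1,2) k(2) core1 free1(1) xyz(3)])
  have free2: "\<forall>e\<in>ET2. a2 \<in> e \<or> b2 \<in> e \<longrightarrow> colouring e \<noteq> 2"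
    using free1(2) T2(5) one_neq_2 by (metis DiffI)
  have core2: "{a0, a1, a2, b0, b1, b2} \<subseteq> VT2" using core1 T2(3) by auto
  obtain VT3 ET3 where "is_tree_in V E VT3 ET3" "proper_edges colouring ET3" "insert z VT2 \<subseteq> VT3"
    by (rule extend_by_leaf[OF T2(1,2) k(3) core2 free2 xyz(4)])
  then show "\<exists>VT ET. is_tree_in V E VT ET \<and> S \<subseteq> VT \<and> proper_edges colouring ET"
    using T1(3) T2(3) xyz(1) by blast
qed

lemma px3_le_3: "px3 V E \<le> 3"
  using px3_le colouring_less_3 three_proper_colouring by blast

end

lemma bipartition_commute: "bipartition V E U W \<Longrightarrow> bipartition V E W U"
  unfolding bipartition_def by (metis Int_commute Un_commute insert_commute)

lemma bipartition_nbhd_subset: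
  assumes "bipartition V E U W" "u \<in> U"
  shows "nbhd V E u \<subseteq> W"
proof
  fix x assume "x \<in> nbhd V E u"
  then have "{x, u} \<in> E" unfolding nbhd_def by simp
  moreover have disj: "U \<inter> W = {}" and "\<forall>e\<in>E. \<exists>u\<in>U. \<exists>w\<in>W. e = {u, w}"
    using assms(1) unfolding bipartition_def by blast+
  ultimately obtain u' w' where "u' \<in> U" "w' \<in> W" "{x, u} = {u', w'}" by blast
  then show "x \<in> W" using disj assms(2) by (auto simp: doubleton_eq_iff)
qed

lemma mem_nbhd_commute: "x \<in> V \<Longrightarrow> y \<in> V \<Longrightarrow> x \<in> nbhd V E y \<longleftrightarrow> y \<in> nbhd V E x"
  unfolding nbhd_def by (auto simp: insert_commute)

lemma min_degree_le_card_nbhd: "finite V \<Longrightarrow> v \<in> V \<Longrightarrow> min_degree V E \<le> card (nbhd V E v)"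
  unfolding min_degree_def by (intro Min_le finite_imageI imageI)

lemma card_indices_in_subset:
  assumes "distinct xs" "A \<subseteq> set xs"
  shows "card {i. i < length xs \<and> xs ! i \<in> A} = card A"
proof -
  have "inj_on ((!) xs) {i. i < length xs \<and> xs ! i \<in> A}"
    using assms(1) by (simp add: inj_on_def nth_eq_iff_index_eq)
  moreover have "(!) xs ` {i. i < length xs \<and> xs ! i \<in> A} = A"
    using assms(2) by (force simp: in_set_conv_nth)
  ultimately show ?thesis using card_image by fastforce
qed

lemma mono_family_last_three:
  fixes N :: "nat \<Rightarrow> 'b set"
  assumes mono: "\<And>i j. i \<le> j \<Longrightarrow> j < n \<Longrightarrow> N i \<subseteq> N j"
    and three: "3 \<le> card {i. i < n \<and> w \<in> N i}"
  shows "3 \<le> n" "w \<in> N (n - 3)" "w \<in> N (n - 2)" "w \<in> N (n - 1)"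
proof -
  have "card {i. i < n \<and> w \<in> N i} \<le> card {..<n}" by (intro card_mono) auto
  then show n: "3 \<le> n" using three by simp
  show w: "w \<in> N (n - 3)"
  proof (rule ccontr)
    assume "w \<notin> N (n - 3)"
    then have "\<not> i \<le> n - 3" if "i < n" "w \<in> N i" for i
      using mono[of i "n - 3"] that n by auto
    then have "{i. i < n \<and> w \<in> N i} \<subseteq> {n - 2, n - 1}" by fastforce
    then have "card {i. i < n \<and> w \<in> N i} \<le> card {n - 2, n - 1}" by (intro card_mono) auto
    also have "\<dots> \<le> 2" by (simp add: card_insert_le_m1)
    finally show False using three by simp
  qed
  have "N (n - 3) \<subseteq> N (n - 2)" "N (n - 3) \<subseteq> N (n - 1)"
    by (rule mono; use n in linarith)+
  then show "w \<in> N (n - 2)" "w \<in> N (n - 1)" using w by auto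
qed

lemma nested_nbhds_common_triple:
  assumes nested: "\<And>i j. i \<le> j \<Longrightarrow> j < length us \<Longrightarrow> nbhd V E (us ! i) \<subseteq> nbhd V E (us ! j)"
    and "3 \<le> card (nbhd V E (us ! 0))"
  obtains b0 b1 b2 where "{b0, b1, b2} \<subseteq> nbhd V E (us ! 0)" "b0 \<noteq> b1" "b0 \<noteq> b2" "b1 \<noteq> b2"
    "\<And>u. u \<in> set us \<Longrightarrow> {u, b0} \<in> E \<and> {u, b1} \<in> E \<and> {u, b2} \<in> E"
proof -
  obtain B where B: "B \<subseteq> nbhd V E (us ! 0)" "card B = 3"
    using assms(2) by (meson obtain_subset_with_card_n)
  then obtain b0 b1 b2 where b: "{b0, b1, b2} \<subseteq> nbhd V E (us ! 0)" "b0 \<noteq> b1" "b0 \<noteq> b2" "b1 \<noteq> b2"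
    by (auto simp: card_3_iff)
  have "{u, b0} \<in> E \<and> {u, b1} \<in> E \<and> {u, b2} \<in> E" if "u \<in> set us" for u
  proof -
    obtain j where "j < length us" "u = us ! j" using \<open>u \<in> set us\<close> by (auto simp: in_set_conv_nth)
    then have "{b0, b1, b2} \<subseteq> nbhd V E u" using nested[of 0 j] b(1) by auto
    then show ?thesis unfolding nbhd_def by (auto simp: insert_commute)
  qed
  with b show ?thesis using that by blast
qed

lemma nested_nbhds_last_three:
  assumes bip: "bipartition V E U W" and us: "distinct us" "set us = U"
    and nested: "\<And>i j. i \<le> j \<Longrightarrow> j < length us \<Longrightarrow> nbhd V E (us ! i) \<subseteq> nbhd V E (us ! j)"
    and w: "w \<in> W" "3 \<le> card (nbhd V E w)"
  shows "3 \<le> length us" "{w, us ! (length us - 3)} \<in> E" "{w, us ! (length us - 2)} \<in> E"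
    "{w, us ! (length us - 1)} \<in> E"
proof -
  let ?n = "length us"
  have parts: "V = U \<union> W" using bip unfolding bipartition_def by blast
  then have "w \<in> V" using w by blast
  have "w \<in> nbhd V E (us ! i) \<longleftrightarrow> us ! i \<in> nbhd V E w" if "i < ?n" for i
  proof -
    have "us ! i \<in> V" using that us(2) parts by (metis UnI1 nth_mem)
    then show ?thesis by (rule mem_nbhd_commute[OF \<open>w \<in> V\<close>])
  qed
  then have "{i. i < ?n \<and> w \<in> nbhd V E (us ! i)} = {i. i < ?n \<and> us ! i \<in> nbhd V E w}"
    by blast
  also have "card \<dots> = card (nbhd V E w)"
    using bipartition_nbhd_subset[OF bipartition_commute[OF bip] w(1)] us
    by (intro card_indices_in_subset) auto
  finally have "3 \<le> card {i. i < ?n \<and> w \<in> nbhd V E (us ! i)}" using w(2) by simp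
  from mono_family_last_three[OF nested this] show "3 \<le> ?n"
    "{w, us ! (?n - 3)} \<in> E" "{w, us ! (?n - 2)} \<in> E" "{w, us ! (?n - 1)} \<in> E"
    unfolding nbhd_def by auto
qed

lemma chain_graph_dominating_triples:
  assumes chain: "chain_graph V E" and "V \<noteq> {}" and min_deg: "3 \<le> min_degree V E"
  obtains U W a0 a1 a2 b0 b1 b2 where "dominating_triples V E U W a0 a1 a2 b0 b1 b2"
proof -
  from chain have "finite V" unfolding chain_graph_def simple_graph_def by blast
  then have deg: "3 \<le> card (nbhd V E v)" if "v \<in> V" for v
    using min_degree_le_card_nbhd[OF _ that] min_deg by (meson le_trans)
  from chain obtain U W us where bip: "bipartition V E U W" and us: "distinct us" "set us = U"
    and nested: "\<And>i j. i \<le> j \<Longrightarrow> j < length us \<Longrightarrow> nbhd V E (us ! i) \<subseteq> nbhd V E (us ! j)"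
    unfolding chain_graph_def by blast
  have parts: "U \<inter> W = {}" "V = U \<union> W" using bip unfolding bipartition_def by auto
  have "U \<noteq> {}"
  proof -
    obtain v where v: "v \<in> V" using \<open>V \<noteq> {}\<close> by blast
    have "nbhd V E v \<noteq> {}" using deg[OF v] by auto
    then show ?thesis
      using v parts bipartition_nbhd_subset[OF bipartition_commute[OF bip]] by blast
  qed
  then have u0: "us ! 0 \<in> U" using us(2) by (auto intro: nth_mem)
  then obtain b0 b1 b2 where b: "{b0, b1, b2} \<subseteq> nbhd V E (us ! 0)" "b0 \<noteq> b1" "b0 \<noteq> b2" "b1 \<noteq> b2"
    and b_adj: "\<And>u. u \<in> U \<Longrightarrow> {u, b0} \<in> E \<and> {u, b1} \<in> E \<and> {u, b2} \<in> E"
    using nested_nbhds_common_triple[OF nested] deg parts us(2) by (metis UnCI)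
  have "b0 \<in> W" using b(1) bipartition_nbhd_subset[OF bip u0] by blast
  define n where "n = length us"
  note last_three = nested_nbhds_last_three[OF bip us nested, folded n_def]
  have n: "3 \<le> n" using last_three(1) deg \<open>b0 \<in> W\<close> parts by blast
  have "dominating_triples V E U W (us ! (n - 3)) (us ! (n - 2)) (us ! (n - 1)) b0 b1 b2"
  proof
    show "us ! (n - 3) \<in> U" "us ! (n - 2) \<in> U" "us ! (n - 1) \<in> U"
      "us ! (n - 3) \<noteq> us ! (n - 2)" "us ! (n - 3) \<noteq> us ! (n - 1)" "us ! (n - 2) \<noteq> us ! (n - 1)"
      using n us unfolding n_def by (auto simp: nth_eq_iff_index_eq)
    show "{w, us ! (n - 3)} \<in> E \<and> {w, us ! (n - 2)} \<in> E \<and> {w, us ! (n - 1)} \<in> E" if "w \<in> W" for w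
      using last_three(2-4) deg that parts by blast
  qed (use parts b b_adj bipartition_nbhd_subset[OF bip u0] in auto)
  then show ?thesis by (rule that)
qed

lemma ex_E_iff:
  "e \<in> ex_E s t \<longleftrightarrow>
    (\<exists>i j. e = {Inl i, Inr j} \<and> 1 \<le> i \<and> i \<le> s \<and> 1 \<le> j \<and> j \<le> t \<and> (s - 3 < i \<or> j \<le> 3))"
  unfolding ex_E_def by blast

lemma Inl_Inr_in_ex_E:
  "1 \<le> i \<Longrightarrow> i \<le> s \<Longrightarrow> 1 \<le> j \<Longrightarrow> j \<le> t \<Longrightarrow> s - 3 < i \<or> j \<le> 3 \<Longrightarrow> {Inl i, Inr j} \<in> ex_E s t"
  unfolding ex_E_def by blast

lemma card_ex_E: "e \<in> ex_E s t \<Longrightarrow> card e = 2"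
  unfolding ex_E_iff by auto

lemma ex_dominating_triples:
  assumes "3 \<le> s" "3 \<le> t"
  shows "dominating_triples (ex_V s t) (ex_E s t) (Inl ` {1..s}) (Inr ` {1..t})
           (Inl (s - 2)) (Inl (s - 1)) (Inl s) (Inr 1) (Inr 2) (Inr 3)"
proof
  fix w :: "nat + nat" assume "w \<in> Inr ` {1..t}"
  then obtain j where j: "w = Inr j" "1 \<le> j" "j \<le> t" by auto
  have "{Inl i, Inr j} \<in> ex_E s t" if "i \<in> {s - 2, s - 1, s}" for i
    using that assms j by (intro Inl_Inr_in_ex_E) auto
  then show "{w, Inl (s - 2)} \<in> ex_E s t \<and> {w, Inl (s - 1)} \<in> ex_E s t \<and> {w, Inl s} \<in> ex_E s t"
    unfolding j(1) insert_commute[of "Inr j"] by simp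
next
  fix u :: "nat + nat" assume "u \<in> Inl ` {1..s}"
  then obtain i where i: "u = Inl i" "1 \<le> i" "i \<le> s" by auto
  have "{Inl i, Inr j} \<in> ex_E s t" if "j \<in> {1, 2, 3}" for j
    using that assms i by (intro Inl_Inr_in_ex_E) auto
  then show "{u, Inr 1} \<in> ex_E s t \<and> {u, Inr 2} \<in> ex_E s t \<and> {u, Inr 3} \<in> ex_E s t"
    using i(1) by simp
qed (use assms in \<open>auto simp: ex_V_def\<close>)

lemma ex_alike_triple:
  fixes c :: "(nat + nat) set \<Rightarrow> nat"
  assumes t: "20 \<le> t" and two_colours: "\<forall>e\<in>ex_E s t. c e < 2"
  obtains J where "J \<subseteq> {4..t}" "card J = 3"
    "\<And>ja jb i. ja \<in> J \<Longrightarrow> jb \<in> J \<Longrightarrow> i \<in> {s - 3<..s} \<Longrightarrow> c {Inl i, Inr ja} = c {Inl i, Inr jb}"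
proof -
  define pattern where "pattern j = restrict (\<lambda>i. c {Inl i, Inr j}) {s - 3<..s}" for j
  define P where "P = PiE {s - 3<..s} (\<lambda>_. {..<2::nat})"
  have "pattern \<in> {4..t} \<rightarrow> P"
  proof
    fix j assume "j \<in> {4..t}"
    then have "{Inl i, Inr j} \<in> ex_E s t" if "i \<in> {s - 3<..s}" for i
      using that by (intro Inl_Inr_in_ex_E) auto
    then show "pattern j \<in> P" using two_colours unfolding pattern_def P_def by auto
  qed
  moreover have "P \<noteq> {}" "finite P" unfolding P_def by (auto simp: PiE_eq_empty_iff lessThan_empty_iff finite_PiE)
  ultimately obtain p where p: "card {4..t} \<le> card (pattern -` {p} \<inter> {4..t}) * card P"
    using pigeonhole_card[of pattern "{4..t}" P] by auto
  have "card P \<le> 8"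
  proof -
    have "card P = 2 ^ card {s - 3<..s}" unfolding P_def by (simp add: card_PiE)
    also have "\<dots> \<le> 2 ^ 3" by (intro power_increasing) auto
    finally show ?thesis by simp
  qed
  then have "card {4..t} \<le> card (pattern -` {p} \<inter> {4..t}) * 8"
    using p by (meson le_trans mult_le_mono2)
  then have "3 \<le> card (pattern -` {p} \<inter> {4..t})" using t by simp
  then obtain J where J: "J \<subseteq> pattern -` {p} \<inter> {4..t}" "card J = 3"
    by (meson obtain_subset_with_card_n)
  have "c {Inl i, Inr ja} = c {Inl i, Inr jb}" if "ja \<in> J" "jb \<in> J" "i \<in> {s - 3<..s}" for ja jb i
  proof -
    have "pattern ja = pattern jb" using J(1) that(1,2) by blast
    then have "pattern ja i = pattern jb i" by simp
    then show ?thesis using that(3) unfolding pattern_def by simp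
  qed
  then show ?thesis using that J by auto
qed

lemma ex_sum_degree_le_3:
  assumes ET: "ET \<subseteq> ex_E s t" and proper: "proper_edges c ET"
    and J: "finite J" "\<forall>j\<in>J. 3 < j"
    and alike: "\<And>ja jb i. ja \<in> J \<Longrightarrow> jb \<in> J \<Longrightarrow> i \<in> {s - 3<..s} \<Longrightarrow> c {Inl i, Inr ja} = c {Inl i, Inr jb}"
  shows "(\<Sum>j\<in>J. card {e\<in>ET. Inr j \<in> e}) \<le> 3"
proof -
  define nbr where "nbr j = {i. {Inl i, Inr j} \<in> ET}" for j
  have nbr_sub: "nbr j \<subseteq> {s - 3<..s}" if "j \<in> J" for j
  proof
    fix i assume "i \<in> nbr j"
    then have "{Inl i, Inr j} \<in> ex_E s t" using ET unfolding nbr_def by auto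
    then show "i \<in> {s - 3<..s}" using J(2) that unfolding ex_E_iff by (auto simp: doubleton_eq_iff)
  qed
  have degree: "card {e\<in>ET. Inr j \<in> e} = card (nbr j)" for j
  proof -
    have "{e\<in>ET. Inr j \<in> e} = (\<lambda>i. {Inl i, Inr j}) ` nbr j"
    proof (intro equalityI subsetI)
      fix e assume e: "e \<in> {e\<in>ET. Inr j \<in> e}"
      then have "e \<in> ex_E s t" using ET by blast
      then obtain i j' where "e = {Inl i, Inr j'}" unfolding ex_E_iff by blast
      with e show "e \<in> (\<lambda>i. {Inl i, Inr j}) ` nbr j" unfolding nbr_def by auto
    qed (auto simp: nbr_def)
    moreover have "inj_on (\<lambda>i. {Inl i, Inr j}) (nbr j)" by (auto simp: inj_on_def doubleton_eq_iff)
    ultimately show ?thesis by (simp add: card_image)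
  qed
  have disjoint: "nbr ja \<inter> nbr jb = {}" if "ja \<in> J" "jb \<in> J" "ja \<noteq> jb" for ja jb
  proof (rule ccontr)
    assume "nbr ja \<inter> nbr jb \<noteq> {}"
    then obtain i where i: "i \<in> nbr ja" "i \<in> nbr jb" by blast
    then have "c {Inl i, Inr ja} \<noteq> c {Inl i, Inr jb}"
      using proper \<open>ja \<noteq> jb\<close> unfolding nbr_def proper_edges_def by (auto simp: doubleton_eq_iff)
    then show False using alike that nbr_sub i by blast
  qed
  have "(\<Sum>j\<in>J. card {e\<in>ET. Inr j \<in> e}) = (\<Sum>j\<in>J. card (nbr j))" by (simp add: degree)
  also have "\<dots> = card (\<Union>j\<in>J. nbr j)"
    using J(1) disjoint by (intro card_UN_disjoint[symmetric]) (auto intro: finite_subset[OF nbr_sub])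
  also have "\<dots> \<le> card {s - 3<..s}" using nbr_sub by (intro card_mono) auto
  finally show ?thesis by simp
qed

lemma ex_not_three_proper_with_two_colours:
  assumes t: "20 \<le> t" and two_colours: "\<forall>e\<in>ex_E s t. c e < 2"
  shows "\<not> three_proper_coloring (ex_V s t) (ex_E s t) c"
proof
  assume colouring: "three_proper_coloring (ex_V s t) (ex_E s t) c"
  obtain J where J: "J \<subseteq> {4..t}" "card J = 3"
    and alike: "\<And>ja jb i. ja \<in> J \<Longrightarrow> jb \<in> J \<Longrightarrow> i \<in> {s - 3<..s} \<Longrightarrow> c {Inl i, Inr ja} = c {Inl i, Inr jb}"
    using ex_alike_triple[OF t two_colours] by blast
  have "Inr ` J \<subseteq> ex_V s t" "card (Inr ` J) = 3"
    using J unfolding ex_V_def by (auto simp: card_image)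
  then obtain VT ET where T: "is_tree_in (ex_V s t) (ex_E s t) VT ET" "Inr ` J \<subseteq> VT"
    and proper: "proper_edges c ET"
    using colouring unfolding three_proper_coloring_def by blast
  have ET: "ET \<subseteq> ex_E s t" using T(1) unfolding is_tree_in_def by blast
  have "4 \<le> (\<Sum>v\<in>Inr ` J. card {e\<in>ET. v \<in> e})"
  proof (rule tree_max_degree_2_sum_degree[OF T(1) _ _ T(2)])
    show "\<forall>e\<in>ET. card e = 2" using ET card_ex_E by blast
    have "\<forall>e\<in>ET. c e < 2" using ET two_colours by blast
    then show "card {e\<in>ET. v \<in> e} \<le> 2" for v by (rule card_incident_le_if_proper[OF proper])
  qed fact
  also have "\<dots> = (\<Sum>j\<in>J. card {e\<in>ET. Inr j \<in> e})" by (simp add: sum.reindex)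
  also have "\<dots> \<le> 3"
  proof (rule ex_sum_degree_le_3[OF ET proper _ _ alike])
    show "finite J" using J(1) by (rule finite_subset) simp
    show "\<forall>j\<in>J. 3 < j" using J(1) by auto
  qed
  finally show False by simp
qed

theorem corollary3p6:
  shows "(\<forall>(V :: 'a set) E. chain_graph V E \<and> connected_graph V E \<and> 3 \<le> min_degree V E
            \<longrightarrow> px3 V E \<le> 3) \<and>
         (\<forall>s t. 4 \<le> s \<and> 20 \<le> t \<longrightarrow> px3 (ex_V s t) (ex_E s t) = 3)"
proof (intro conjI allI impI)
  fix V :: "'a set" and E
  assume "chain_graph V E \<and> connected_graph V E \<and> 3 \<le> min_degree V E"
  then have "chain_graph V E" "V \<noteq> {}" "3 \<le> min_degree V E"
    unfolding connected_graph_def by blast+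
  then obtain U W a0 a1 a2 b0 b1 b2 where "dominating_triples V E U W a0 a1 a2 b0 b1 b2"
    by (rule chain_graph_dominating_triples)
  then show "px3 V E \<le> 3" by (rule dominating_triples.px3_le_3)
next
  fix s t :: nat
  assume st: "4 \<le> s \<and> 20 \<le> t"
  then interpret dominating_triples "ex_V s t" "ex_E s t" "Inl ` {1..s}" "Inr ` {1..t}"
    "Inl (s - 2)" "Inl (s - 1)" "Inl s" "Inr 1" "Inr 2" "Inr 3"
    by (intro ex_dominating_triples) auto
  have "2 < px3 (ex_V s t) (ex_E s t)"
  proof (rule less_px3)
    show "\<forall>e\<in>ex_E s t. colouring e < 3" using colouring_less_3 by blast
    show "three_proper_coloring (ex_V s t) (ex_E s t) colouring" by (rule three_proper_colouring)
    show "\<not> three_proper_coloring (ex_V s t) (ex_E s t) c" if "\<forall>e\<in>ex_E s t. c e < 2" for c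
      using ex_not_three_proper_with_two_colours st that by blast
  qed
  then show "px3 (ex_V s t) (ex_E s t) = 3" using px3_le_3 by simp
qed

end
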